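(* Let $G$ be an abelian group, let $A,B\subset G$ be finite non-empty sets, let $0<\epsilon<\frac{1}{2}$, and set $\beta:=\beta((1+4\epsilon)|A|)$. If $|B|\geq (\frac{1}{2}+\epsilon)(|A|+\beta)$, then there are at least $\epsilon ^2 |B|^2$ ordered pairs $(b_1,b_2)\in B^2$ such that $b_1+b_2\not \in A$.
   Context: For a positive real $t$, $\beta(t)=\max\{|H|: H \text{ a subgroup of } G,\ |H|\leq t\}$. *)

theory Defs
  imports "HOL-Algebra.Algebra"
begin

text \<open>Subgroups of size at most t are necessarily finite; we require finiteness
  explicitly since card of an infinite set is 0 in Isabelle.\<close>
definition beta :: "('a, 'b) monoid_scheme \<Rightarrow> real \<Rightarrow> nat" where
  "beta G t = Max {card H | H. subgroup H G \<and> finite H \<and> real (card H) \<le> t}"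

end

theory Submission
  imports Defs
begin

text \<open>
  Write \<open>r(s)\<close> for the number of representations \<open>s = x y\<close> with \<open>(x, y) \<in> U \<times> V\<close> and
  \<open>N\<^sub>t(U, V) = \<Sum>\<^sub>s min t (r s)\<close>. A Pollard-type theorem for abelian groups gives a finite subgroup
  \<open>H\<close> with \<open>N\<^sub>t(U, V) \<ge> t (|U| + |V| - t - |H|)\<close> and \<open>N\<^sub>t(U, V) \<ge> t |H|\<close>; it is proved by
  induction on \<open>|V|\<close>. If every translate \<open>V e\<close> either lies in \<open>U\<close> or misses it, then \<open>V\<close> lies in a
  coset of the period \<open>H\<close> of \<open>U\<close> and \<open>N\<^sub>t(U, V) \<ge> t |U|\<close>. Otherwise Dyson's \<open>e\<close>-transform splits
  the representation function as \<open>r = r\<^sub>1 + r\<^sub>2\<close> for two pairs of sets with smaller \<open>V\<close>, and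
  the bound for one of them transfers back.

  Apply this with \<open>U = V = B\<close> and \<open>t = \<epsilon> |B|\<close>. Sums in \<open>A\<close> contribute at most \<open>t |A|\<close> to
  \<open>N\<^sub>t(B, B)\<close>, the others at most their number \<open>N\<close>. If \<open>N < \<epsilon>\<^sup>2 |B|\<^sup>2\<close>, the second bound forces
  \<open>|H| \<le> (1 + 4 \<epsilon>) |A|\<close>, hence \<open>|H| \<le> \<beta>\<close>, and then the first bound together with the
  hypothesis on \<open>|B|\<close> gives \<open>N \<ge> \<epsilon>\<^sup>2 |B|\<^sup>2\<close>.
\<close>

section \<open>Representation counts\<close>

definition sumset :: "('a, 'b) monoid_scheme \<Rightarrow> 'a set \<Rightarrow> 'a set \<Rightarrow> 'a set" where
  "sumset M U V = (\<lambda>(x, y). x \<otimes>\<^bsub>M\<^esub> y) ` (U \<times> V)"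

definition rep_count :: "('a, 'b) monoid_scheme \<Rightarrow> 'a set \<Rightarrow> 'a set \<Rightarrow> 'a \<Rightarrow> nat" where
  "rep_count M U V s = card {(x, y) \<in> U \<times> V. x \<otimes>\<^bsub>M\<^esub> y = s}"

definition pollard_sum :: "('a, 'b) monoid_scheme \<Rightarrow> real \<Rightarrow> 'a set \<Rightarrow> 'a set \<Rightarrow> real" where
  "pollard_sum M t U V = (\<Sum>s\<in>sumset M U V. min t (real (rep_count M U V s)))"

lemma finite_sumset: "finite U \<Longrightarrow> finite V \<Longrightarrow> finite (sumset M U V)"
  unfolding sumset_def by simp

lemma rep_count_eq_0:
  assumes "s \<notin> sumset M U V"
  shows "rep_count M U V s = 0"
proof -
  have "{(x, y) \<in> U \<times> V. x \<otimes>\<^bsub>M\<^esub> y = s} = {}"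
    using assms unfolding sumset_def by force
  then show ?thesis
    unfolding rep_count_def by (metis card.empty)
qed

lemma rep_count_Un_left:
  assumes "finite U" "finite U'" "finite V" "U \<inter> U' = {}"
  shows "rep_count M (U \<union> U') V s = rep_count M U V s + rep_count M U' V s"
proof -
  have eq: "{(x, y) \<in> (U \<union> U') \<times> V. x \<otimes>\<^bsub>M\<^esub> y = s}
      = {(x, y) \<in> U \<times> V. x \<otimes>\<^bsub>M\<^esub> y = s} \<union> {(x, y) \<in> U' \<times> V. x \<otimes>\<^bsub>M\<^esub> y = s}"
    by auto
  have "finite {(x, y) \<in> U \<times> V. x \<otimes>\<^bsub>M\<^esub> y = s}"
    "finite {(x, y) \<in> U' \<times> V. x \<otimes>\<^bsub>M\<^esub> y = s}"
    using assms by (auto intro: finite_subset[of _ "U \<times> V"] finite_subset[of _ "U' \<times> V"])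
  moreover have "{(x, y) \<in> U \<times> V. x \<otimes>\<^bsub>M\<^esub> y = s} \<inter> {(x, y) \<in> U' \<times> V. x \<otimes>\<^bsub>M\<^esub> y = s} = {}"
    using assms(4) by auto
  ultimately show ?thesis
    unfolding rep_count_def eq by (rule card_Un_disjoint)
qed

lemma rep_count_Un_right:
  assumes "finite U" "finite V" "finite V'" "V \<inter> V' = {}"
  shows "rep_count M U (V \<union> V') s = rep_count M U V s + rep_count M U V' s"
proof -
  have eq: "{(x, y) \<in> U \<times> (V \<union> V'). x \<otimes>\<^bsub>M\<^esub> y = s}
      = {(x, y) \<in> U \<times> V. x \<otimes>\<^bsub>M\<^esub> y = s} \<union> {(x, y) \<in> U \<times> V'. x \<otimes>\<^bsub>M\<^esub> y = s}"
    by auto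
  have "finite {(x, y) \<in> U \<times> V. x \<otimes>\<^bsub>M\<^esub> y = s}"
    "finite {(x, y) \<in> U \<times> V'. x \<otimes>\<^bsub>M\<^esub> y = s}"
    using assms by (auto intro: finite_subset[of _ "U \<times> V"] finite_subset[of _ "U \<times> V'"])
  moreover have "{(x, y) \<in> U \<times> V. x \<otimes>\<^bsub>M\<^esub> y = s} \<inter> {(x, y) \<in> U \<times> V'. x \<otimes>\<^bsub>M\<^esub> y = s} = {}"
    using assms(4) by auto
  ultimately show ?thesis
    unfolding rep_count_def eq by (rule card_Un_disjoint)
qed

lemma sum_rep_count:
  assumes "finite U" "finite V" "finite T"
  shows "(\<Sum>s\<in>T. rep_count M U V s) = card {(x, y) \<in> U \<times> V. x \<otimes>\<^bsub>M\<^esub> y \<in> T}"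
proof -
  let ?P = "{(x, y) \<in> U \<times> V. x \<otimes>\<^bsub>M\<^esub> y \<in> T}"
  have "(\<Sum>s\<in>T. rep_count M U V s) = (\<Sum>s\<in>T. \<Sum>p\<in>{p \<in> ?P. (\<lambda>(x, y). x \<otimes>\<^bsub>M\<^esub> y) p = s}. 1)"
    unfolding rep_count_def by (intro sum.cong refl) (auto intro: arg_cong[where f = card])
  also have "\<dots> = (\<Sum>p\<in>?P. 1)"
    by (rule sum.group) (use assms in \<open>auto intro: finite_subset[of _ "U \<times> V"]\<close>)
  finally show ?thesis by simp
qed

lemma sum_rep_count_superset:
  assumes "finite U" "finite V" "finite T" "sumset M U V \<subseteq> T"
  shows "(\<Sum>s\<in>T. rep_count M U V s) = card U * card V"
proof -
  have "{(x, y) \<in> U \<times> V. x \<otimes>\<^bsub>M\<^esub> y \<in> T} = U \<times> V"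
    using assms(4) unfolding sumset_def by auto
  then show ?thesis
    using assms(1-3) by (simp add: sum_rep_count card_cartesian_product)
qed

lemma pollard_sum_eq_sum_superset:
  assumes "finite S" "sumset M U V \<subseteq> S" "0 \<le> t"
  shows "pollard_sum M t U V = (\<Sum>s\<in>S. min t (real (rep_count M U V s)))"
  unfolding pollard_sum_def
  by (rule sum.mono_neutral_left) (use assms in \<open>auto simp: rep_count_eq_0\<close>)

lemma pollard_sum_mono:
  assumes "finite U" "finite V" "finite U'" "finite V'" "0 \<le> t"
    and "\<And>s. rep_count M U' V' s \<le> rep_count M U V s"
  shows "pollard_sum M t U' V' \<le> pollard_sum M t U V"
proof -
  let ?S = "sumset M U V \<union> sumset M U' V'"
  have "finite ?S"
    using assms(1-4) by (simp add: finite_sumset)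
  then show ?thesis
    using assms(5,6) by (simp add: pollard_sum_eq_sum_superset[of ?S] sum_mono min.coboundedI2)
qed

lemma pollard_sum_split:
  fixes t :: real
  assumes "finite U" "finite V" "finite U1" "finite V1" "finite U2" "finite V2" "k \<le> t"
    and split: "\<And>s. rep_count M U V s = rep_count M U1 V1 s + rep_count M U2 V2 s"
    and bound: "\<And>s. rep_count M U1 V1 s \<le> k"
  shows "card U1 * card V1 + pollard_sum M (t - k) U2 V2 \<le> pollard_sum M t U V"
proof -
  let ?S = "sumset M U V \<union> sumset M U1 V1 \<union> sumset M U2 V2"
  have fin: "finite ?S"
    using assms(1-6) by (simp add: finite_sumset)
  have "(\<Sum>s\<in>?S. rep_count M U1 V1 s) = card U1 * card V1"
    using fin assms(3,4) by (intro sum_rep_count_superset) auto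
  then have "card U1 * card V1 + pollard_sum M (t - k) U2 V2
      = (\<Sum>s\<in>?S. rep_count M U1 V1 s + min (t - k) (rep_count M U2 V2 s))"
    using fin assms(7)
    by (simp add: sum.distrib pollard_sum_eq_sum_superset[of ?S] flip: of_nat_sum)
  also have "\<dots> \<le> (\<Sum>s\<in>?S. min t (rep_count M U V s))"
  proof (rule sum_mono)
    fix s
    have "real (rep_count M U1 V1 s) \<le> k"
      using bound[of s] by simp
    then show "rep_count M U1 V1 s + min (t - k) (rep_count M U2 V2 s) \<le> min t (rep_count M U V s)"
      unfolding split[of s] using assms(7) by linarith
  qed
  also have "\<dots> = pollard_sum M t U V"
    using fin assms(7) by (intro pollard_sum_eq_sum_superset[symmetric]) auto
  finally show ?thesis .
qed

lemma pollard_sum_le: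
  assumes "finite U" "finite V" "finite A" "0 \<le> t"
  shows "pollard_sum M t U V \<le> t * card A + card {(x, y) \<in> U \<times> V. x \<otimes>\<^bsub>M\<^esub> y \<notin> A}"
proof -
  let ?S = "sumset M U V" and ?m = "\<lambda>s. min t (real (rep_count M U V s))"
  have fin: "finite ?S"
    using assms by (simp add: finite_sumset)
  have "(\<Sum>s\<in>?S \<inter> A. ?m s) \<le> card (?S \<inter> A) * t"
    by (rule sum_bounded_above) simp
  also have "\<dots> \<le> t * card A"
    using assms by (simp add: mult.commute mult_left_mono card_mono)
  finally have in_A: "(\<Sum>s\<in>?S \<inter> A. ?m s) \<le> t * card A" .
  have "(\<Sum>s\<in>?S - A. ?m s) \<le> (\<Sum>s\<in>?S - A. real (rep_count M U V s))"
    by (rule sum_mono) simp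
  also have "\<dots> = card {(x, y) \<in> U \<times> V. x \<otimes>\<^bsub>M\<^esub> y \<in> ?S - A}"
    using assms fin by (simp add: sum_rep_count flip: of_nat_sum)
  also have "{(x, y) \<in> U \<times> V. x \<otimes>\<^bsub>M\<^esub> y \<in> ?S - A} = {(x, y) \<in> U \<times> V. x \<otimes>\<^bsub>M\<^esub> y \<notin> A}"
    unfolding sumset_def by auto
  finally have "(\<Sum>s\<in>?S - A. ?m s) \<le> card {(x, y) \<in> U \<times> V. x \<otimes>\<^bsub>M\<^esub> y \<notin> A}" .
  with in_A show ?thesis
    unfolding pollard_sum_def using sum.Int_Diff[OF fin, of ?m A] by linarith
qed

section \<open>Dyson's \<open>e\<close>-transform\<close>

lemma (in group) rep_count_le_card_right:
  assumes "U \<subseteq> carrier G" "V \<subseteq> carrier G" "finite V"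
  shows "rep_count G U V s \<le> card V"
  unfolding rep_count_def
proof (rule card_inj_on_le[of snd])
  show "inj_on snd {(x, y) \<in> U \<times> V. x \<otimes> y = s}"
    using assms by (auto simp: inj_on_def) (metis r_cancel subsetD)
qed (use assms in auto)

lemma (in comm_group) rep_count_translate_swap:
  assumes "U \<subseteq> carrier G" "V \<subseteq> carrier G" "e \<in> carrier G"
  shows "rep_count G ((\<lambda>y. y \<otimes> e) ` U) V s = rep_count G ((\<lambda>y. y \<otimes> e) ` V) U s"
proof -
  define P where "P Z W = {(x, y) \<in> (\<lambda>y. y \<otimes> e) ` Z \<times> W. x \<otimes> y = s}" for Z W
  define f where "f = (\<lambda>(x, y). (y \<otimes> e, x \<otimes> inv e))"
  have f_swap: "f (z \<otimes> e, y) = (y \<otimes> e, z)" if "z \<in> carrier G" for z y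
    using that assms(3) by (simp add: f_def m_assoc)
  have comm: "y \<otimes> e \<otimes> z = z \<otimes> e \<otimes> y" if "z \<in> carrier G" "y \<in> carrier G" for z y
    using that assms(3) by (simp add: m_ac)
  have f_maps: "f ` P Z W \<subseteq> P W Z" if "Z \<subseteq> carrier G" "W \<subseteq> carrier G" for Z W
  proof (rule image_subsetI)
    fix p assume "p \<in> P Z W"
    then obtain z y where zy: "p = (z \<otimes> e, y)" "z \<in> Z" "y \<in> W" "z \<otimes> e \<otimes> y = s"
      unfolding P_def by blast
    with that have "z \<in> carrier G" "y \<in> carrier G"
      by auto
    with zy show "f p \<in> P W Z"
      unfolding P_def using f_swap comm by auto
  qed
  have f_inv: "f (f p) = p" if "p \<in> P Z W" "Z \<subseteq> carrier G" "W \<subseteq> carrier G" for p Z W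
    using that assms(3) unfolding P_def f_def by (auto simp: m_assoc)
  have "bij_betw f (P U V) (P V U)"
    by (rule bij_betw_byWitness[where f' = f]) (use assms f_maps f_inv in blast)+
  then show ?thesis
    unfolding rep_count_def P_def by (rule bij_betw_same_card)
qed

lemma (in comm_group) rep_count_e_transform:
  assumes "U \<subseteq> carrier G" "V \<subseteq> carrier G" "finite U" "finite V" "e \<in> carrier G"
  defines "V1 \<equiv> {y \<in> V. y \<otimes> e \<in> U}" and "V2 \<equiv> {y \<in> V. y \<otimes> e \<notin> U}"
    and "U1 \<equiv> U \<union> (\<lambda>y. y \<otimes> e) ` V" and "U2 \<equiv> U - (\<lambda>y. y \<otimes> e) ` V"
  shows "rep_count G U V s = rep_count G U1 V1 s + rep_count G U2 V2 s"
proof -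
  let ?T = "\<lambda>Z. (\<lambda>y. y \<otimes> e) ` Z"
  have V: "V = V1 \<union> V2" "V1 \<inter> V2 = {}"
    unfolding V1_def V2_def by auto
  have U: "U = ?T V1 \<union> U2" "?T V1 \<inter> U2 = {}"
    unfolding V1_def U2_def by auto
  have U1: "U1 = U \<union> ?T V2" "U \<inter> ?T V2 = {}"
    unfolding U1_def V1_def V2_def by auto
  have fin: "finite V1" "finite V2" "finite U2" "finite (?T V1)" "finite (?T V2)"
    using assms(3,4) unfolding V1_def V2_def U2_def by auto
  have carrier: "V1 \<subseteq> carrier G" "V2 \<subseteq> carrier G"
    using assms(2) unfolding V1_def V2_def by auto
  have "rep_count G U V s = rep_count G U V1 s + rep_count G U V2 s"
    using V fin assms(3) by (metis rep_count_Un_right)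
  also have "rep_count G U V2 s = rep_count G (?T V1) V2 s + rep_count G U2 V2 s"
    using U fin by (metis rep_count_Un_left)
  also have "rep_count G (?T V1) V2 s = rep_count G (?T V2) V1 s"
    using carrier assms(5) by (rule rep_count_translate_swap)
  also have "rep_count G U V1 s + (rep_count G (?T V2) V1 s + rep_count G U2 V2 s)
      = rep_count G U1 V1 s + rep_count G U2 V2 s"
    using U1 fin assms(3) by (simp add: rep_count_Un_left)
  finally show ?thesis .
qed

lemma (in comm_group) card_e_transform:
  assumes "U \<subseteq> carrier G" "V \<subseteq> carrier G" "finite U" "finite V" "e \<in> carrier G"
  defines "V1 \<equiv> {y \<in> V. y \<otimes> e \<in> U}" and "V2 \<equiv> {y \<in> V. y \<otimes> e \<notin> U}"
    and "U1 \<equiv> U \<union> (\<lambda>y. y \<otimes> e) ` V" and "U2 \<equiv> U - (\<lambda>y. y \<otimes> e) ` V"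
  shows "card U1 + card V1 = card U + card V" "card U2 + card V1 = card U"
    "card V2 + card V1 = card V"
proof -
  let ?T = "\<lambda>Z. (\<lambda>y. y \<otimes> e) ` Z"
  have card_T: "card (?T Z) = card Z" if "Z \<subseteq> V" for Z
    using that assms(2,5) by (intro card_image inj_on_g) auto
  have fin: "finite V1" "finite V2" "finite U2" "finite (?T V1)" "finite (?T V2)"
    using assms(3,4) unfolding V1_def V2_def U2_def by auto
  have "U1 = U \<union> ?T V2" "U \<inter> ?T V2 = {}"
    unfolding U1_def V1_def V2_def by auto
  then have "card U1 = card U + card V2"
    using card_Un_disjoint[of U "?T V2"] fin assms(3) card_T[of V2] V2_def by auto
  moreover have "U = U2 \<union> ?T V1" "U2 \<inter> ?T V1 = {}"
    unfolding U2_def V1_def by auto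
  then have "card U = card U2 + card V1"
    using card_Un_disjoint[of U2 "?T V1"] fin card_T[of V1] V1_def by auto
  moreover have "V = V1 \<union> V2" "V1 \<inter> V2 = {}"
    unfolding V1_def V2_def by auto
  then have "card V = card V1 + card V2"
    using card_Un_disjoint[of V1 V2] fin by auto
  ultimately show "card U1 + card V1 = card U + card V" "card U2 + card V1 = card U"
    "card V2 + card V1 = card V"
    by simp_all
qed

section \<open>Periods\<close>

definition period :: "('a, 'b) monoid_scheme \<Rightarrow> 'a set \<Rightarrow> 'a set" where
  "period M U = {g \<in> carrier M. \<forall>x\<in>U. x \<otimes>\<^bsub>M\<^esub> g \<in> U}"

lemma period_memI: "g \<in> carrier M \<Longrightarrow> (\<And>x. x \<in> U \<Longrightarrow> x \<otimes>\<^bsub>M\<^esub> g \<in> U) \<Longrightarrow> g \<in> period M U"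
  unfolding period_def by blast

lemma period_memD:
  assumes "g \<in> period M U"
  shows "g \<in> carrier M" "x \<in> U \<Longrightarrow> x \<otimes>\<^bsub>M\<^esub> g \<in> U"
  using assms unfolding period_def by blast+

lemma period_subset_carrier: "period M U \<subseteq> carrier M"
  unfolding period_def by blast

lemma (in group) subgroup_period:
  assumes "U \<subseteq> carrier G" "finite U"
  shows "subgroup (period G U) G"
proof (rule subgroupI)
  show "period G U \<subseteq> carrier G"
    by (rule period_subset_carrier)
  have "\<one> \<in> period G U"
    using assms(1) by (intro period_memI) auto
  then show "period G U \<noteq> {}"
    by blast
next
  fix g assume g: "g \<in> period G U"
  note gc = period_memD(1)[OF g]
  have "(\<lambda>x. x \<otimes> g) ` U \<subseteq> U"
  proof (rule image_subsetI)
    fix x assume "x \<in> U"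
    with g show "x \<otimes> g \<in> U"
      by (rule period_memD(2))
  qed
  then have onto: "(\<lambda>x. x \<otimes> g) ` U = U"
    by (rule endo_inj_surj[OF assms(2) _ inj_on_g[OF assms(1) gc]])
  show "inv g \<in> period G U"
  proof (rule period_memI)
    fix x assume "x \<in> U"
    then obtain x' where x': "x' \<in> U" "x = x' \<otimes> g"
      using onto by blast
    then have "x' \<in> carrier G"
      using assms(1) by blast
    with x' gc show "x \<otimes> inv g \<in> U"
      by (simp add: m_assoc)
  qed (use gc in simp)
next
  fix g h assume g: "g \<in> period G U" and h: "h \<in> period G U"
  note gc = period_memD(1)[OF g] and hc = period_memD(1)[OF h]
  show "g \<otimes> h \<in> period G U"
  proof (rule period_memI)
    fix x assume x: "x \<in> U"
    have "x \<otimes> g \<otimes> h \<in> U"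
      using h period_memD(2)[OF g x] by (rule period_memD(2))
    moreover have "x \<in> carrier G"
      using x assms(1) by blast
    ultimately show "x \<otimes> (g \<otimes> h) \<in> U"
      using gc hc by (simp add: m_assoc)
  qed (use gc hc in simp)
qed

lemma (in group) card_period_le:
  assumes "U \<subseteq> carrier G" "finite U" "x \<in> U"
  shows "finite (period G U)" "card (period G U) \<le> card U"
proof -
  have xc: "x \<in> carrier G"
    using assms(1,3) by blast
  have inj: "inj_on ((\<otimes>) x) (period G U)"
    using inj_on_cmult[OF xc] period_subset_carrier by (rule inj_on_subset)
  have img: "(\<otimes>) x ` period G U \<subseteq> U"
  proof (rule image_subsetI)
    fix g assume "g \<in> period G U"
    then show "x \<otimes> g \<in> U"
      using assms(3) by (rule period_memD(2))
  qed
  show "finite (period G U)" "card (period G U) \<le> card U"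
    using inj_on_finite[OF inj img assms(2)] card_inj_on_le[OF inj img assms(2)] .
qed

lemma (in comm_group) mem_period_if_closed:
  assumes "U \<subseteq> carrier G" "V \<subseteq> carrier G" "y \<in> V" "y0 \<in> V"
    and closed: "\<forall>e\<in>carrier G. (\<exists>y\<in>V. y \<otimes> e \<in> U) \<longrightarrow> (\<forall>y\<in>V. y \<otimes> e \<in> U)"
  shows "y \<otimes> inv y0 \<in> period G U"
proof (rule period_memI)
  have yc: "y \<in> carrier G" and y0c: "y0 \<in> carrier G"
    using assms(2-4) by blast+
  then show "y \<otimes> inv y0 \<in> carrier G"
    by simp
  fix x assume x: "x \<in> U"
  then have xc: "x \<in> carrier G"
    using assms(1) by blast
  have "y0 \<otimes> (inv y0 \<otimes> x) \<in> U"
    using x xc y0c by (simp add: m_assoc [symmetric])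
  then have "y \<otimes> (inv y0 \<otimes> x) \<in> U"
    using closed assms(3,4) xc y0c by blast
  moreover have "y \<otimes> (inv y0 \<otimes> x) = x \<otimes> (y \<otimes> inv y0)"
    using xc yc y0c by (simp add: m_ac)
  ultimately show "x \<otimes> (y \<otimes> inv y0) \<in> U"
    by simp
qed

lemma (in comm_group) card_le_rep_count_if_closed:
  assumes "U \<subseteq> carrier G" "V \<subseteq> carrier G" "finite U" "finite V" "x \<in> U" "y0 \<in> V"
    and closed: "\<forall>e\<in>carrier G. (\<exists>y\<in>V. y \<otimes> e \<in> U) \<longrightarrow> (\<forall>y\<in>V. y \<otimes> e \<in> U)"
  shows "card V \<le> rep_count G U V (x \<otimes> y0)"
  unfolding rep_count_def
proof (rule card_inj_on_le[of "\<lambda>y. (x \<otimes> y0 \<otimes> inv y, y)"])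
  have xc: "x \<in> carrier G" and y0c: "y0 \<in> carrier G"
    using assms(1,2,5,6) by blast+
  show "(\<lambda>y. (x \<otimes> y0 \<otimes> inv y, y)) ` V \<subseteq> {(u, y) \<in> U \<times> V. u \<otimes> y = x \<otimes> y0}"
  proof (rule image_subsetI)
    fix y assume y: "y \<in> V"
    then have yc: "y \<in> carrier G"
      using assms(2) by blast
    have "inv (y \<otimes> inv y0) \<in> period G U"
      using subgroup_period[OF assms(1,3)] mem_period_if_closed[OF assms(1,2) y assms(6) closed]
      by (rule subgroup.m_inv_closed)
    then have "x \<otimes> inv (y \<otimes> inv y0) \<in> U"
      using assms(5) by (rule period_memD(2))
    moreover have "x \<otimes> inv (y \<otimes> inv y0) = x \<otimes> y0 \<otimes> inv y"
      using xc yc y0c by (simp add: inv_mult_group m_ac)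
    moreover have "x \<otimes> y0 \<otimes> inv y \<otimes> y = x \<otimes> y0"
      using xc yc y0c by (simp add: m_assoc)
    ultimately show "(x \<otimes> y0 \<otimes> inv y, y) \<in> {(u, y) \<in> U \<times> V. u \<otimes> y = x \<otimes> y0}"
      using y by simp
  qed
qed (use assms(3,4) in \<open>auto simp: inj_on_def intro: finite_subset[of _ "U \<times> V"]\<close>)

lemma (in comm_group) pollard_sum_closed_case:
  fixes t :: real
  assumes "U \<subseteq> carrier G" "V \<subseteq> carrier G" "finite U" "finite V" "U \<noteq> {}" "y0 \<in> V"
    and "0 \<le> t" "t \<le> card V"
    and closed: "\<forall>e\<in>carrier G. (\<exists>y\<in>V. y \<otimes> e \<in> U) \<longrightarrow> (\<forall>y\<in>V. y \<otimes> e \<in> U)"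
  shows "card V \<le> card (period G U)" "t * card U \<le> pollard_sum G t U V"
proof -
  have y0c: "y0 \<in> carrier G"
    using assms(2,6) by blast
  have "finite (period G U)"
    using assms(1,3,5) card_period_le(1) by blast
  moreover have "inj_on (\<lambda>y. y \<otimes> inv y0) V"
    using assms(2) y0c by (simp add: inj_on_g)
  moreover have "(\<lambda>y. y \<otimes> inv y0) ` V \<subseteq> period G U"
    using mem_period_if_closed[OF assms(1,2) _ assms(6) closed] by blast
  ultimately show "card V \<le> card (period G U)"
    by (intro card_inj_on_le)
  let ?Z = "(\<lambda>x. x \<otimes> y0) ` U"
  have "t * card U = (\<Sum>s\<in>?Z. t)"
    using assms(1) y0c by (simp add: card_image inj_on_g)
  also have "\<dots> \<le> (\<Sum>s\<in>?Z. min t (real (rep_count G U V s)))"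
    using card_le_rep_count_if_closed[OF assms(1-4) _ assms(6) closed] assms(8)
    by (intro sum_mono) force
  also have "\<dots> \<le> pollard_sum G t U V"
    unfolding pollard_sum_def
    using assms(3,4,6,7) by (intro sum_mono2 finite_sumset) (auto simp: sumset_def)
  finally show "t * card U \<le> pollard_sum G t U V" .
qed

section \<open>Pollard's theorem for abelian groups\<close>

definition has_pollard_subgroup :: "('a, 'b) monoid_scheme \<Rightarrow> real \<Rightarrow> 'a set \<Rightarrow> 'a set \<Rightarrow> bool" where
  "has_pollard_subgroup G t U V \<longleftrightarrow> (\<exists>H. subgroup H G \<and> finite H \<and> card H \<le> card U + card V \<and>
     t * (real (card U + card V) - t - card H) \<le> pollard_sum G t U V \<and>
     t * real (card H) \<le> pollard_sum G t U V)"

lemma has_pollard_subgroup_mono: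
  assumes "has_pollard_subgroup G t U' V'" "pollard_sum G t U' V' \<le> pollard_sum G t U V"
    and "card U' + card V' = card U + card V"
  shows "has_pollard_subgroup G t U V"
proof -
  obtain H where "subgroup H G" "finite H" "card H \<le> card U' + card V'"
    "t * (real (card U' + card V') - t - card H) \<le> pollard_sum G t U' V'"
    "t * real (card H) \<le> pollard_sum G t U' V'"
    using assms(1) unfolding has_pollard_subgroup_def by blast
  with assms(2,3) show ?thesis
    unfolding has_pollard_subgroup_def by (intro exI[of _ H]) simp
qed

lemma has_pollard_subgroup_split:
  fixes t :: real
  assumes "has_pollard_subgroup G (t - k) U2 V2"
    and "card U1 * k + pollard_sum G (t - k) U2 V2 \<le> pollard_sum G t U V"
    and "card U1 + k = card U + card V" "card U2 + card V2 + 2 * k = card U + card V"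
  shows "has_pollard_subgroup G t U V"
proof -
  obtain H where H: "subgroup H G" "finite H" "card H \<le> card U2 + card V2"
    "(t - k) * (card U2 + card V2 - (t - k) - card H) \<le> pollard_sum G (t - k) U2 V2"
    "(t - k) * card H \<le> pollard_sum G (t - k) U2 V2"
    using assms(1) unfolding has_pollard_subgroup_def by blast
  define u where "u = real (card U + card V)"
  define h where "h = real (card H)"
  have u: "real (card U1) = u - k" "real (card U2 + card V2) = u - 2 * k" "h \<le> u - 2 * k"
    using assms(3,4) H(3) unfolding u_def h_def by simp_all
  have main: "(u - k) * k + pollard_sum G (t - k) U2 V2 \<le> pollard_sum G t U V"
    using assms(2) u(1) by simp
  \<comment> \<open>the right-hand side equals \<open>t (u - t - h) + k h\<close>\<close>
  have "t * (u - t - h) \<le> (u - k) * k + (t - k) * (u - 2 * k - (t - k) - h)"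
    by (simp add: h_def algebra_simps)
  with main H(4)[unfolded u(2)] have bound1: "t * (u - t - h) \<le> pollard_sum G t U V"
    unfolding h_def by linarith
  have "k * h \<le> k * (u - k)"
    using u(3) by (intro mult_left_mono) auto
  then have "t * h \<le> (u - k) * k + (t - k) * h"
    by (simp add: algebra_simps)
  with main H(5) have bound2: "t * h \<le> pollard_sum G t U V"
    unfolding h_def by linarith
  show ?thesis
    unfolding has_pollard_subgroup_def
    using H(1-3) assms(4) bound1 bound2 unfolding u_def h_def
    by (intro exI[of _ H]) auto
qed

lemma (in comm_group) has_pollard_subgroup_closed:
  fixes t :: real
  assumes "U \<subseteq> carrier G" "V \<subseteq> carrier G" "finite U" "finite V" "U \<noteq> {}" "V \<noteq> {}"
    and "0 \<le> t" "t \<le> card V"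
    and closed: "\<forall>e\<in>carrier G. (\<exists>y\<in>V. y \<otimes> e \<in> U) \<longrightarrow> (\<forall>y\<in>V. y \<otimes> e \<in> U)"
  shows "has_pollard_subgroup G t U V"
proof -
  let ?H = "period G U"
  obtain x0 y0 where "x0 \<in> U" "y0 \<in> V"
    using assms(5,6) by blast
  have H: "subgroup ?H G" "finite ?H" "card ?H \<le> card U"
    using subgroup_period[OF assms(1,3)] card_period_le[OF assms(1,3) \<open>x0 \<in> U\<close>] by auto
  have "card V \<le> card ?H" "t * card U \<le> pollard_sum G t U V"
    using pollard_sum_closed_case[OF assms(1-5) \<open>y0 \<in> V\<close> assms(7,8) closed] by auto
  moreover have "t * (real (card U + card V) - t - card ?H) \<le> t * card U" "t * card ?H \<le> t * card U"
    using assms(7) calculation(1) H(3) by (simp_all add: mult_left_mono)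
  ultimately show ?thesis
    unfolding has_pollard_subgroup_def using H by (intro exI[of _ ?H]) auto
qed

lemma (in comm_group) has_pollard_subgroup_e_transform:
  fixes t :: real
  assumes "U \<subseteq> carrier G" "V \<subseteq> carrier G" "finite U" "finite V"
    and "0 < t" "t \<le> card U" "t \<le> card V"
    and e: "e \<in> carrier G" "y1 \<in> V" "y1 \<otimes> e \<in> U" "y2 \<in> V" "y2 \<otimes> e \<notin> U"
    and IH: "\<And>U' V' (t' :: real). card V' < card V \<Longrightarrow> U' \<subseteq> carrier G \<Longrightarrow> V' \<subseteq> carrier G \<Longrightarrow>
      finite U' \<Longrightarrow> finite V' \<Longrightarrow> 0 < t' \<Longrightarrow> t' \<le> card U' \<Longrightarrow> t' \<le> card V' \<Longrightarrow>
      has_pollard_subgroup G t' U' V'"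
  shows "has_pollard_subgroup G t U V"
proof -
  define V1 where "V1 = {y \<in> V. y \<otimes> e \<in> U}"
  define V2 where "V2 = {y \<in> V. y \<otimes> e \<notin> U}"
  define U1 where "U1 = U \<union> (\<lambda>y. y \<otimes> e) ` V"
  define U2 where "U2 = U - (\<lambda>y. y \<otimes> e) ` V"
  define k where "k = card V1"
  note card_e = card_e_transform[OF assms(1-4) e(1), folded V1_def V2_def U1_def U2_def]
  have split: "rep_count G U V s = rep_count G U1 V1 s + rep_count G U2 V2 s" for s
    unfolding V1_def V2_def U1_def U2_def using assms(1-4) e(1) by (rule rep_count_e_transform)
  have fin: "finite V1" "finite V2" "finite U1" "finite U2"
    using assms(3,4) unfolding V1_def V2_def U1_def U2_def by auto
  have carr: "V1 \<subseteq> carrier G" "V2 \<subseteq> carrier G" "U1 \<subseteq> carrier G" "U2 \<subseteq> carrier G"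
    using assms(1,2) e(1) unfolding V1_def V2_def U1_def U2_def by auto
  have "0 < k" "0 < card V2"
    using fin e unfolding k_def V1_def V2_def by (auto simp: card_gt_0_iff)
  show ?thesis
  proof (cases "t \<le> k")
    case True
    have "card V1 < card V" "t \<le> card U1" "t \<le> card V1"
      using card_e \<open>0 < card V2\<close> assms(6) True unfolding k_def by linarith+
    then have "has_pollard_subgroup G t U1 V1"
      by (intro IH[OF _ carr(3,1) fin(3,1) assms(5)])
    moreover have "pollard_sum G t U1 V1 \<le> pollard_sum G t U V"
      using assms(3-5) fin split by (intro pollard_sum_mono) auto
    ultimately show ?thesis
      using card_e(1) by (rule has_pollard_subgroup_mono)
  next
    case False
    have "card V2 < card V" "0 < t - k" "t - k \<le> card U2" "t - k \<le> card V2"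
      using card_e \<open>0 < k\<close> assms(6,7) False unfolding k_def by linarith+
    then have "has_pollard_subgroup G (t - k) U2 V2"
      by (intro IH[OF _ carr(4,2) fin(4,2)])
    moreover have "rep_count G U1 V1 s \<le> k" for s
      unfolding k_def using carr(3,1) fin(1) by (rule rep_count_le_card_right)
    then have "card U1 * k + pollard_sum G (t - k) U2 V2 \<le> pollard_sum G t U V"
      using pollard_sum_split[OF assms(3,4) fin(3,1,4,2), where M = G and k = k and t = t]
        split False
      unfolding k_def by simp
    moreover have "card U1 + k = card U + card V" "card U2 + card V2 + 2 * k = card U + card V"
      using card_e unfolding k_def by linarith+
    ultimately show ?thesis
      by (rule has_pollard_subgroup_split)
  qed
qed

theorem (in comm_group) pollard_subgroup:
  fixes t :: real
  assumes "U \<subseteq> carrier G" "V \<subseteq> carrier G" "finite U" "finite V"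
    and "0 < t" "t \<le> card U" "t \<le> card V"
  shows "has_pollard_subgroup G t U V"
  using assms
proof (induction "card V" arbitrary: U V t rule: less_induct)
  case (less V U t)
  have "U \<noteq> {}" "V \<noteq> {}"
    using less.prems(5-7) by auto
  show ?case
  proof (cases "\<forall>e\<in>carrier G. (\<exists>y\<in>V. y \<otimes> e \<in> U) \<longrightarrow> (\<forall>y\<in>V. y \<otimes> e \<in> U)")
    case True
    then show ?thesis
      using has_pollard_subgroup_closed[OF less.prems(1-4) \<open>U \<noteq> {}\<close> \<open>V \<noteq> {}\<close> _ less.prems(7)]
        less.prems(5) by simp
  next
    case False
    then obtain e y1 y2 where e: "e \<in> carrier G" "y1 \<in> V" "y1 \<otimes> e \<in> U" "y2 \<in> V" "y2 \<otimes> e \<notin> U"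
      by blast
    show ?thesis
      by (rule has_pollard_subgroup_e_transform[OF less.prems e less.hyps])
  qed
qed

section \<open>Pairs with sum outside \<open>A\<close>\<close>

lemma (in group) card_product_le_bad_pairs:
  assumes "U \<subseteq> carrier G" "V \<subseteq> carrier G" "finite U" "finite V" "finite A"
  shows "card U * card V \<le> card U * card A + card {(x, y) \<in> U \<times> V. x \<otimes> y \<notin> A}"
proof -
  let ?good = "{(x, y) \<in> U \<times> V. x \<otimes> y \<in> A}" and ?bad = "{(x, y) \<in> U \<times> V. x \<otimes> y \<notin> A}"
  have "inj_on (\<lambda>(x, y). (x, x \<otimes> y)) ?good"
    using assms(1,2) by (auto simp: inj_on_def) (metis l_cancel subsetD)
  moreover have "(\<lambda>(x, y). (x, x \<otimes> y)) ` ?good \<subseteq> U \<times> A"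
    by auto
  ultimately have "card ?good \<le> card U * card A"
    using assms(3,5) card_inj_on_le[of _ ?good "U \<times> A"] by (simp add: card_cartesian_product)
  moreover have "finite ?good" "finite ?bad"
    using assms(3,4) by (auto intro: finite_subset[of _ "U \<times> V"])
  then have "card (?good \<union> ?bad) = card ?good + card ?bad"
    by (rule card_Un_disjoint) auto
  moreover have "?good \<union> ?bad = U \<times> V"
    by auto
  ultimately show ?thesis
    by (simp add: card_cartesian_product)
qed

lemma (in group) card_lt_if_few_bad_pairs:
  assumes "B \<subseteq> carrier G" "finite B" "finite A" "B \<noteq> {}"
    and "card {(x, y) \<in> B \<times> B. x \<otimes> y \<notin> A} < 1/4 * real (card B) ^ 2"
  shows "3 * card B < 4 * card A"
proof -
  define n where "n = real (card B)"
  have "0 < n"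
    unfolding n_def using assms(2,4) by (simp add: card_gt_0_iff)
  have "n * n \<le> n * card A + card {(x, y) \<in> B \<times> B. x \<otimes> y \<notin> A}"
    using card_product_le_bad_pairs[OF assms(1,1,2,2,3)] unfolding n_def
    by (simp flip: of_nat_mult of_nat_add)
  with assms(5)[folded n_def] have "n * (3 * n) < n * (4 * card A)"
    by (simp add: power2_eq_square algebra_simps)
  with \<open>0 < n\<close> have "3 * n < 4 * card A"
    by (simp add: mult_less_cancel_left_pos)
  then show ?thesis
    unfolding n_def by linarith
qed

lemma (in comm_group) subgroup_bound_bad_pairs:
  fixes t :: real
  assumes "B \<subseteq> carrier G" "finite B" "finite A" "0 < t" "t \<le> card B"
  defines "N \<equiv> real (card {(x, y) \<in> B \<times> B. x \<otimes> y \<notin> A})"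
  shows "\<exists>H. subgroup H G \<and> finite H \<and>
    t * (2 * real (card B) - t - real (card H)) \<le> t * real (card A) + N \<and>
    t * real (card H) \<le> t * real (card A) + N"
proof -
  have "pollard_sum G t B B \<le> t * card A + N"
    unfolding N_def using assms(2,3,4) by (intro pollard_sum_le) auto
  moreover have "has_pollard_subgroup G t B B"
    using assms(1,1,2,2,4,5,5) by (rule pollard_subgroup)
  ultimately show ?thesis
    unfolding has_pollard_subgroup_def by (auto simp: algebra_simps)
qed

lemma bad_pairs_bound_arith:
  fixes \<epsilon> n a b h N :: real
  assumes "0 < \<epsilon>" "\<epsilon> < 1/2" "0 \<le> a" "0 \<le> b" "0 < n"
    and "(1/2 + \<epsilon>) * (a + b) \<le> n" "h \<le> b"
    and "\<epsilon> * n * (2 * n - \<epsilon> * n - h) \<le> \<epsilon> * n * a + N"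
  shows "\<epsilon>\<^sup>2 * n\<^sup>2 \<le> N"
proof -
  have "0 \<le> \<epsilon> * (1 - 2 * \<epsilon>) * (a + b)"
    using assms(1-4) by simp
  moreover have "(2 - 2 * \<epsilon>) * ((1/2 + \<epsilon>) * (a + b)) = a + b + \<epsilon> * (1 - 2 * \<epsilon>) * (a + b)"
    by (simp add: field_simps)
  ultimately have "a + b \<le> (2 - 2 * \<epsilon>) * ((1/2 + \<epsilon>) * (a + b))"
    by linarith
  also have "\<dots> \<le> (2 - 2 * \<epsilon>) * n"
    using assms(2,6) by (intro mult_left_mono) auto
  finally have "\<epsilon> * n * (\<epsilon> * n) \<le> \<epsilon> * n * (2 * n - \<epsilon> * n - b - a)"
    using assms(1,5) by (intro mult_left_mono) (auto simp: algebra_simps)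
  also have "\<dots> \<le> N"
  proof -
    have "\<epsilon> * n * h \<le> \<epsilon> * n * b"
      using assms(1,5,7) by simp
    with assms(8) show ?thesis
      by (simp add: algebra_simps)
  qed
  finally show ?thesis
    by (simp add: power2_eq_square algebra_simps)
qed

lemma card_le_beta:
  assumes "subgroup H G" "finite H" "real (card H) \<le> T"
  shows "card H \<le> beta G T"
proof -
  have "k \<le> nat \<lceil>T\<rceil>" if "real k \<le> T" for k
    using that real_nat_ceiling_ge[of T] by (meson order_trans of_nat_le_iff)
  then have "{card K | K. subgroup K G \<and> finite K \<and> real (card K) \<le> T} \<subseteq> {..nat \<lceil>T\<rceil>}"
    by auto
  then show ?thesis
    unfolding beta_def using assms by (intro Max_ge) (auto dest: finite_subset)
qed

lemma (in comm_group) small_subgroup_if_few_bad_pairs: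
  fixes \<epsilon> :: real
  assumes "B \<subseteq> carrier G" "finite A" "finite B" "B \<noteq> {}" "0 < \<epsilon>" "\<epsilon> < 1/2"
  defines "n \<equiv> real (card B)" and "N \<equiv> real (card {(x, y) \<in> B \<times> B. x \<otimes> y \<notin> A})"
  assumes few: "N < \<epsilon>\<^sup>2 * n\<^sup>2"
  shows "\<exists>H. subgroup H G \<and> finite H \<and> real (card H) \<le> (1 + 4 * \<epsilon>) * card A \<and>
    \<epsilon> * n * (2 * n - \<epsilon> * n - card H) \<le> \<epsilon> * n * card A + N"
proof -
  define a t where "a = real (card A)" and "t = \<epsilon> * n"
  have "\<epsilon> * \<epsilon> \<le> 1/2 * (1/2)"
    using assms(5,6) by (intro mult_mono) auto
  then have "\<epsilon>\<^sup>2 * n\<^sup>2 \<le> 1/4 * n\<^sup>2"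
    by (intro mult_right_mono) (auto simp: power2_eq_square)
  with few have "card {(x, y) \<in> B \<times> B. x \<otimes> y \<notin> A} < 1/4 * real (card B) ^ 2"
    unfolding N_def n_def by linarith
  then have "3 * card B < 4 * card A"
    by (rule card_lt_if_few_bad_pairs[OF assms(1,3,2,4)])
  then have "3 * n < 4 * a"
    unfolding n_def a_def by linarith
  have "0 < n"
    unfolding n_def using assms(3,4) by (simp add: card_gt_0_iff)
  then have "0 < t" "t \<le> n"
    unfolding t_def using assms(5,6) by auto
  then obtain H where H: "subgroup H G" "finite H"
    "t * (2 * n - t - card H) \<le> t * a + N" "t * card H \<le> t * a + N"
    using subgroup_bound_bad_pairs[OF assms(1,3,2), of t] unfolding n_def a_def N_def
    by blast
  have "t * card H < t * (a + \<epsilon> * n)"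
    using H(4) few unfolding t_def by (simp add: algebra_simps power2_eq_square)
  then have "card H < a + \<epsilon> * n"
    using \<open>0 < t\<close> by simp
  moreover have "\<epsilon> * n \<le> \<epsilon> * (4 * a)"
    using \<open>3 * n < 4 * a\<close> \<open>0 < n\<close> assms(5) by simp
  ultimately have "card H \<le> (1 + 4 * \<epsilon>) * card A"
    unfolding a_def by (simp add: algebra_simps)
  with H show ?thesis
    unfolding t_def a_def by blast
qed

theorem corollary3p3:
  fixes G (structure) and A B :: "'a set" and \<epsilon> :: real
  assumes "comm_group G"
    and "A \<subseteq> carrier G" and "B \<subseteq> carrier G"
    and "finite A" and "A \<noteq> {}" and "finite B" and "B \<noteq> {}"
    and "0 < \<epsilon>" and "\<epsilon> < 1/2"
    and "real (card B) \<ge> (1/2 + \<epsilon>) * (real (card A) + real (beta G ((1 + 4*\<epsilon>) * real (card A))))"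
  shows "real (card {(b1, b2). b1 \<in> B \<and> b2 \<in> B \<and> b1 \<otimes> b2 \<notin> A}) \<ge> \<epsilon>^2 * real (card B)^2"
proof (rule ccontr)
  interpret comm_group G by fact
  define n a b N where "n = real (card B)" and "a = real (card A)"
    and "b = real (beta G ((1 + 4 * \<epsilon>) * real (card A)))"
    and "N = real (card {(x, y) \<in> B \<times> B. x \<otimes> y \<notin> A})"
  assume "\<not> ?thesis"
  then have few: "N < \<epsilon>\<^sup>2 * n\<^sup>2"
    unfolding N_def n_def by (simp add: case_prod_beta)
  then obtain H where H: "subgroup H G" "finite H" "card H \<le> (1 + 4 * \<epsilon>) * card A"
    "\<epsilon> * n * (2 * n - \<epsilon> * n - card H) \<le> \<epsilon> * n * a + N"
    using small_subgroup_if_few_bad_pairs[OF assms(3,4,6,7,8,9)] unfolding n_def a_def N_def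
    by blast
  have "card H \<le> beta G ((1 + 4 * \<epsilon>) * card A)"
    using H(1-3) by (rule card_le_beta)
  then have "card H \<le> b"
    unfolding b_def by simp
  moreover have "0 < n"
    unfolding n_def using assms(6,7) by (simp add: card_gt_0_iff)
  ultimately have "\<epsilon>\<^sup>2 * n\<^sup>2 \<le> N"
    using bad_pairs_bound_arith[OF assms(8,9) _ _ _ assms(10)[folded b_def, folded n_def a_def] _ H(4)]
    unfolding a_def b_def by simp
  with few show False
    by simp
qed

end
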